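(* Let $h\ge 2$ be an integer and let $O$ be a finite set of next hops with $\delta=|O|$ and probability distribution $(p_o)_{o\in O}$, with entropy $H_O=\sum_{o\in O} p_o\log_2\frac{1}{p_o}$. Let $T$ be the complete binary trie of height $h$ whose $2^h$ leaves are labeled independently with next hop $o$ with probability $p_o$, let $D$ be the DAG obtained from $T$ by trie-folding, and let $V^j_D$ be the set of nodes of $D$ at level $j$. For $1\le j\le h$ put $\beta_j=\min\{\frac{H_O}{h-j}2^h+3,\,2^{h-j},\,\delta^{2^j}\}$ (with the first term $+\infty$ for $j=h$), let $k^*\in\{1,\dots,h\}$ be a level at which $\beta_j$ attains its maximum, and suppose each node of $D$ is stored using $2(h-k^* )$ bits. Then the expected number of bits needed to store the nodes of $D$ (at levels $1,\dots,h$), namely $2(h-k^* )\sum_{j=1}^h E(|V^j_D|)$, is at most \[2 h H_O 2^{h} + 6h^2.\]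
   Context: Levels: the level of a node of $T$ is $h$ minus its distance from the root; the root has level $h$, leaves level $0$, and level $j$ has $2^{h-j}$ nodes, each the root of a subtrie of height $j$ with $2^j$ labeled leaves. Trie-folding merges nodes whose rooted subtries are identical (same structure and same leaf next-hop labels), producing a DAG $D$; the nodes of $D$ at level $j$ correspond to the distinct leaf-label strings of length $2^j$ among the $2^{h-j}$ level-$j$ subtries. Each node of $D$ stores two child pointers of $h-k^*$ bits each. *)

theory Defs
  imports Complex_Main "HOL-Library.FuncSet"
begin

text \<open>A leaf labeling of the complete binary trie of height h: leaves are numbered
 0 .. 2^h - 1 from left to right; each gets a next hop.\<close>

definition labelings :: "nat \<Rightarrow> 'a set \<Rightarrow> (nat \<Rightarrow> 'a) set" where
  "labelings h Hops = PiE {..<2^h} (\<lambda>_. Hops)"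

definition lab_prob :: "nat \<Rightarrow> ('a \<Rightarrow> real) \<Rightarrow> (nat \<Rightarrow> 'a) \<Rightarrow> real" where
  "lab_prob h p f = (\<Prod>i<2^h. p (f i))"

text \<open>Nodes of the folded DAG D at level j: the distinct leaf-label strings of the
 2^(h-j) level-j subtries (the m-th one covers leaves m*2^j .. m*2^j + 2^j - 1).\<close>
definition dag_level_nodes :: "nat \<Rightarrow> (nat \<Rightarrow> 'a) \<Rightarrow> nat \<Rightarrow> 'a list set" where
  "dag_level_nodes h f j =
     (\<lambda>m. map (\<lambda>i. f (m * 2^j + i)) [0..<2^j]) ` {..<2^(h-j)}"

definition expected_level_nodes :: "nat \<Rightarrow> 'a set \<Rightarrow> ('a \<Rightarrow> real) \<Rightarrow> nat \<Rightarrow> real" where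
  "expected_level_nodes h Hops p j =
     (\<Sum>f\<in>labelings h Hops. lab_prob h p f * real (card (dag_level_nodes h f j)))"

definition entropy_O :: "'a set \<Rightarrow> ('a \<Rightarrow> real) \<Rightarrow> real" where
  "entropy_O Hops p = (\<Sum>x\<in>Hops. p x * log 2 (1 / p x))"

definition beta :: "nat \<Rightarrow> 'a set \<Rightarrow> ('a \<Rightarrow> real) \<Rightarrow> nat \<Rightarrow> real" where
  "beta h Hops p j =
     (if j = h then min (2 ^ (h - j)) (real (card Hops) ^ (2 ^ j))
      else min (entropy_O Hops p / real (h - j) * 2 ^ h + 3)
               (min (2 ^ (h - j)) (real (card Hops) ^ (2 ^ j))))"

end

theory Submission
  imports Defs
begin

text \<open>A level-\<open>j\<close> node of the folded DAG is a string \<open>w\<close> of \<open>2^j\<close> labels that occurs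
  among the \<open>2^(h-j)\<close> level-\<open>j\<close> subtries. By the union bound the probability of this is at
  most \<open>min 1 (2^(h-j) * q w)\<close>, where \<open>q w\<close> is the probability of the string, and an elementary
  estimate bounds this minimum by \<open>2^(h-j) q w log(1/q w)/(h-j) + 3 q w\<close>. Summing over all
  strings, the entropy of \<open>q\<close> is \<open>2^j H_O\<close>, so the expected number of level-\<open>j\<close> nodes is at
  most \<open>H_O 2^h/(h-j) + 3\<close>; the two counting bounds in \<open>beta\<close> are immediate. Hence every
  level has at most \<open>beta k\<^sup>*\<close> expected nodes, and multiplying the resulting bound
  \<open>h (H_O 2^h/(h-k\<^sup>*) + 3)\<close> by \<open>2(h-k\<^sup>*)\<close> gives the claim.\<close>

lemma sum_PiE_prod_cylinder:
  fixes p :: "'a \<Rightarrow> real"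
  assumes "finite I" "finite A" "(\<Sum>x\<in>A. p x) = 1" "J \<subseteq> I" "\<And>i. i \<in> J \<Longrightarrow> t i \<in> A"
  shows "(\<Sum>f\<in>PiE I (\<lambda>_. A). (\<Prod>i\<in>I. p (f i)) * of_bool (\<forall>i\<in>J. f i = t i))
           = (\<Prod>i\<in>J. p (t i))"
proof -
  have "finite J" using assms(1,4) by (rule rev_finite_subset)
  define c where "c i x = (if i \<in> J then of_bool (x = t i) else 1 :: real)" for i x
  have "(\<Sum>f\<in>PiE I (\<lambda>_. A). (\<Prod>i\<in>I. p (f i)) * of_bool (\<forall>i\<in>J. f i = t i))
      = (\<Sum>f\<in>PiE I (\<lambda>_. A). \<Prod>i\<in>I. p (f i) * c i (f i))"
  proof (rule sum.cong[OF refl])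
    fix f
    have "(\<Prod>i\<in>I. c i (f i)) = of_bool (\<forall>i\<in>J. f i = t i)"
      using \<open>finite I\<close> \<open>finite J\<close> \<open>J \<subseteq> I\<close> by (auto simp: c_def prod.If_cases Int_absorb1)
    then show "(\<Prod>i\<in>I. p (f i)) * of_bool (\<forall>i\<in>J. f i = t i) = (\<Prod>i\<in>I. p (f i) * c i (f i))"
      by (simp add: prod.distrib)
  qed
  also have "\<dots> = (\<Prod>i\<in>I. \<Sum>x\<in>A. p x * c i x)"
    using assms(1,2) by (simp add: prod_sum_PiE)
  also have "\<dots> = (\<Prod>i\<in>I. if i \<in> J then p (t i) else 1)"
    using assms(2,3,5) by (intro prod.cong refl)
      (auto simp: c_def of_bool_def if_distrib[of "(*) (p _)"] cong: if_cong)
  also have "\<dots> = (\<Prod>i\<in>J. p (t i))"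
    using assms(1,4) by (simp add: prod.If_cases Int_absorb1)
  finally show ?thesis .
qed

abbreviation words :: "nat \<Rightarrow> 'a set \<Rightarrow> 'a list set" where
  "words n A \<equiv> {w. set w \<subseteq> A \<and> length w = n}"

definition word_prob :: "('a \<Rightarrow> real) \<Rightarrow> 'a list \<Rightarrow> real" where
  "word_prob p w = (\<Prod>k<length w. p (w ! k))"

lemma word_prob_Nil [simp]: "word_prob p [] = 1"
  by (simp add: word_prob_def)

lemma word_prob_Cons [simp]: "word_prob p (x # w) = p x * word_prob p w"
  unfolding word_prob_def by (simp only: length_Cons prod.lessThan_Suc_shift) simp

lemma word_prob_nonneg: "(\<And>x. x \<in> set w \<Longrightarrow> 0 \<le> p x) \<Longrightarrow> 0 \<le> word_prob p w"
  by (induction w) auto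

lemma word_prob_pos: "(\<And>x. x \<in> set w \<Longrightarrow> p x > 0) \<Longrightarrow> word_prob p w > 0"
  by (induction w) auto

lemma words_0: "words 0 A = {[]}"
  by auto

lemma sum_words_Suc:
  "(\<Sum>w\<in>words (Suc n) A. g w) = (\<Sum>x\<in>A. \<Sum>w\<in>words n A. g (x # w))"
proof -
  have "inj_on (\<lambda>(w, x). x # w) (words n A \<times> A)"
    by (auto simp: inj_on_def)
  then show ?thesis
    by (simp add: lists_length_Suc_eq sum.reindex sum.cartesian_product' sum.swap[of _ A])
qed

lemma sum_word_prob:
  fixes p :: "'a \<Rightarrow> real"
  assumes "(\<Sum>x\<in>A. p x) = 1"
  shows "(\<Sum>w\<in>words n A. word_prob p w) = 1"
proof (induction n)
  case (Suc n)
  then show ?case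
    by (simp add: sum_words_Suc sum_distrib_left[symmetric] sum_distrib_right[symmetric] assms)
qed (simp only: words_0, simp)

lemma sum_word_prob_log:
  fixes p :: "'a \<Rightarrow> real"
  assumes "\<And>x. x \<in> A \<Longrightarrow> p x > 0" "(\<Sum>x\<in>A. p x) = 1"
  shows "(\<Sum>w\<in>words n A. word_prob p w * log 2 (1 / word_prob p w)) = n * entropy_O A p"
proof (induction n)
  case (Suc n)
  have "(\<Sum>w\<in>words (Suc n) A. word_prob p w * log 2 (1 / word_prob p w))
      = (\<Sum>x\<in>A. \<Sum>w\<in>words n A. p x * word_prob p w * (log 2 (1 / p x) + log 2 (1 / word_prob p w)))"
    unfolding sum_words_Suc using assms(1)
    by (intro sum.cong refl) (auto simp: log_mult_pos[symmetric] word_prob_pos subset_iff)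
  also have "\<dots> = (\<Sum>x\<in>A. p x * log 2 (1 / p x)) * (\<Sum>w\<in>words n A. word_prob p w)
      + (\<Sum>x\<in>A. p x) * (\<Sum>w\<in>words n A. word_prob p w * log 2 (1 / word_prob p w))"
    by (simp only: sum_product sum.distrib[symmetric]) (simp add: algebra_simps)
  also have "\<dots> = Suc n * entropy_O A p"
    using Suc by (simp add: sum_word_prob assms(2) entropy_O_def algebra_simps)
  finally show ?case .
qed (simp only: words_0, simp)

lemma min_1_le_information_bound:
  fixes q :: real and l :: nat
  assumes q: "0 < q" "q \<le> 1" and l: "1 \<le> l"
  shows "min 1 (2^l * q) \<le> 2^l * q * log 2 (1 / q) / l + 3 * q"
proof -
  have info_nonneg: "0 \<le> 2^l * q * log 2 (1 / q) / l"
    using q by simp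
  consider "1/3 \<le> q" | "2^l * q \<le> 1" | "q < 1/3" "1 < 2^l * q"
    by linarith
  then show ?thesis
  proof cases
    case 1
    then show ?thesis using info_nonneg by linarith
  next
    case 2
    then have "log 2 (2^l) \<le> log 2 (1 / q)"
      using q by (subst log_le_cancel_iff) (auto simp: field_simps)
    then have "2^l * q * l \<le> 2^l * q * log 2 (1 / q)"
      using q by (intro mult_left_mono) auto
    then have "2^l * q \<le> 2^l * q * log 2 (1 / q) / l"
      using l by (simp add: le_divide_eq)
    then show ?thesis using q by linarith
  next
    case 3
    \<comment> \<open>Here it suffices that \<open>x log\<^sub>2 x \<le> (x - 1) l\<close> for \<open>x = 2^l q\<close>, which follows from
      \<open>log\<^sub>2 x \<le> (x - 1) log\<^sub>2 3\<close> (as \<open>ln x \<le> x - 1\<close>) and \<open>log\<^sub>2 (3 x) \<le> l\<close>.\<close>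
    define x where "x = 2^l * q"
    have x: "1 < x" "3 * x < 2^l"
      using 3 by (simp_all add: x_def)
    have "1 / q = 2^l / x"
      using q by (simp add: x_def)
    then have log_inv_q: "log 2 (1 / q) = l - log 2 x"
      using x by (simp add: log_divide_pos)
    have "log 2 (3 * x) \<le> log 2 (2^l)"
      using x by (subst log_le_cancel_iff) auto
    then have log3x: "log 2 3 + log 2 x \<le> l"
      using x by (simp add: log_mult_pos)
    have "1 \<le> ln (3::real)"
      using exp_le by (simp add: ln_ge_iff)
    then have "x - 1 \<le> (x - 1) * ln 3"
      using x by (simp add: mult_le_cancel_left1)
    then have "ln x \<le> (x - 1) * ln 3"
      using ln_le_minus_one[of x] x by (meson order_trans zero_less_one less_trans)
    then have "log 2 x \<le> (x - 1) * log 2 3"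
      by (simp add: log_def divide_right_mono)
    then have "l \<le> x * (l - log 2 x)"
      using mult_left_mono[OF log3x, of "x - 1"] x by (simp add: algebra_simps)
    then have "1 \<le> 2^l * q * log 2 (1 / q) / l"
      using l by (simp add: log_inv_q x_def le_divide_eq)
    then show ?thesis using q by linarith
  qed
qed

lemma subtrie_leaf_less:
  fixes m i j h :: nat
  assumes "j \<le> h" "m < 2^(h-j)" "i < 2^j"
  shows "m * 2^j + i < 2^h"
proof -
  have "m * 2^j + i < (m + 1) * 2^j" using assms(3) by simp
  also have "\<dots> \<le> 2^(h-j) * 2^j" using assms(2) by (intro mult_right_mono) auto
  also have "\<dots> = 2^h" using assms(1) by (simp add: power_add[symmetric])
  finally show ?thesis .
qed

lemma lab_prob_nonneg:
  assumes "\<And>x. x \<in> Hops \<Longrightarrow> 0 \<le> p x" "f \<in> labelings h Hops"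
  shows "0 \<le> lab_prob h p f"
  using assms by (auto simp: lab_prob_def labelings_def PiE_iff intro!: prod_nonneg)

lemma sum_lab_prob:
  assumes "finite Hops" "(\<Sum>x\<in>Hops. p x) = 1"
  shows "(\<Sum>f\<in>labelings h Hops. lab_prob h p f) = 1"
  using sum_PiE_prod_cylinder[of "{..<(2::nat)^h}" Hops p "{}"] assms
  by (simp add: labelings_def lab_prob_def)

definition subtrie_labels :: "(nat \<Rightarrow> 'a) \<Rightarrow> nat \<Rightarrow> nat \<Rightarrow> 'a list" where
  "subtrie_labels f j m = map (\<lambda>i. f (m * 2^j + i)) [0..<2^j]"

lemma dag_level_nodes_eq: "dag_level_nodes h f j = subtrie_labels f j ` {..<2^(h-j)}"
  by (simp add: dag_level_nodes_def subtrie_labels_def)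

lemma sum_lab_prob_subtrie_eq:
  assumes "finite Hops" "(\<Sum>x\<in>Hops. p x) = 1" "j \<le> h" "m < 2^(h-j)"
    and w: "w \<in> words (2^j) Hops"
  shows "(\<Sum>f\<in>labelings h Hops. lab_prob h p f * of_bool (subtrie_labels f j m = w)) = word_prob p w"
proof -
  define J where "J = (\<lambda>k. m * 2^j + k) ` {..<2^j}"
  have J: "J \<subseteq> {..<2^h}"
    using subtrie_leaf_less[OF assms(3,4)] by (auto simp: J_def)
  have subtrie_eq: "subtrie_labels f j m = w \<longleftrightarrow> (\<forall>i\<in>J. f i = w ! (i - m * 2^j))"
    for f :: "nat \<Rightarrow> 'a"
    using w by (auto simp: J_def subtrie_labels_def list_eq_iff_nth_eq)
  have "\<And>i. i \<in> J \<Longrightarrow> w ! (i - m * 2^j) \<in> Hops"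
    using w by (auto simp: J_def)
  then have "(\<Sum>f\<in>labelings h Hops. lab_prob h p f * of_bool (subtrie_labels f j m = w))
      = (\<Prod>i\<in>J. p (w ! (i - m * 2^j)))"
    unfolding labelings_def lab_prob_def subtrie_eq
    by (rule sum_PiE_prod_cylinder[OF finite_lessThan assms(1,2) J])
  also have "\<dots> = word_prob p w"
    using w by (simp add: J_def prod.reindex word_prob_def)
  finally show ?thesis .
qed

definition level_node_prob :: "nat \<Rightarrow> 'a set \<Rightarrow> ('a \<Rightarrow> real) \<Rightarrow> nat \<Rightarrow> 'a list \<Rightarrow> real" where
  "level_node_prob h Hops p j w =
     (\<Sum>f\<in>labelings h Hops. lab_prob h p f * of_bool (w \<in> dag_level_nodes h f j))"

lemma dag_level_nodes_subset_words:
  assumes "j \<le> h" "f \<in> labelings h Hops"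
  shows "dag_level_nodes h f j \<subseteq> words (2^j) Hops"
  using assms subtrie_leaf_less[OF assms(1)]
  by (auto simp: dag_level_nodes_eq subtrie_labels_def labelings_def PiE_iff)

lemma expected_level_nodes_eq_sum_level_node_prob:
  assumes "finite Hops" "j \<le> h"
  shows "expected_level_nodes h Hops p j = (\<Sum>w\<in>words (2^j) Hops. level_node_prob h Hops p j w)"
proof -
  have "real (card (dag_level_nodes h f j))
      = (\<Sum>w\<in>words (2^j) Hops. of_bool (w \<in> dag_level_nodes h f j))"
    if "f \<in> labelings h Hops" for f
    using dag_level_nodes_subset_words[OF assms(2) that] finite_lists_length_eq[OF assms(1)]
    by (simp add: sum_of_bool_eq Int_absorb1)
  then show ?thesis
    unfolding expected_level_nodes_def level_node_prob_def
    by (simp add: sum_distrib_left sum.swap[of _ "words (2^j) Hops"] cong: sum.cong)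
qed

lemma level_node_prob_le_1:
  assumes "finite Hops" "\<And>x. x \<in> Hops \<Longrightarrow> 0 \<le> p x" "(\<Sum>x\<in>Hops. p x) = 1"
  shows "level_node_prob h Hops p j w \<le> 1"
proof -
  have "level_node_prob h Hops p j w \<le> (\<Sum>f\<in>labelings h Hops. lab_prob h p f)"
    unfolding level_node_prob_def
    by (intro sum_mono) (simp add: lab_prob_nonneg[OF assms(2)] mult_left_le)
  then show ?thesis using sum_lab_prob[OF assms(1,3)] by simp
qed

lemma of_bool_mem_image_le_sum:
  assumes "finite M"
  shows "of_bool (w \<in> g ` M) \<le> (\<Sum>m\<in>M. of_bool (g m = w) :: real)"
proof (cases "w \<in> g ` M")
  case True
  then obtain m where "m \<in> M" "g m = w" by auto
  then have "(of_bool (g m = w) :: real) \<le> (\<Sum>m\<in>M. of_bool (g m = w))"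
    using assms by (intro member_le_sum) auto
  with \<open>g m = w\<close> True show ?thesis by simp
qed (simp add: sum_nonneg)

lemma level_node_prob_le_word_prob:
  assumes "finite Hops" "\<And>x. x \<in> Hops \<Longrightarrow> 0 \<le> p x" "(\<Sum>x\<in>Hops. p x) = 1" "j \<le> h"
    and "w \<in> words (2^j) Hops"
  shows "level_node_prob h Hops p j w \<le> 2^(h-j) * word_prob p w"
proof -
  have "level_node_prob h Hops p j w
      \<le> (\<Sum>f\<in>labelings h Hops. lab_prob h p f * (\<Sum>m<2^(h-j). of_bool (subtrie_labels f j m = w)))"
    unfolding level_node_prob_def dag_level_nodes_eq
    by (intro sum_mono mult_left_mono of_bool_mem_image_le_sum lab_prob_nonneg[OF assms(2)]) auto
  also have "\<dots> = (\<Sum>m<2^(h-j). \<Sum>f\<in>labelings h Hops. lab_prob h p f * of_bool (subtrie_labels f j m = w))"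
    unfolding sum_distrib_left by (rule sum.swap)
  also have "\<dots> = 2^(h-j) * word_prob p w"
    using sum_lab_prob_subtrie_eq[OF assms(1,3,4) _ assms(5)] by simp
  finally show ?thesis .
qed

lemma entropy_O_nonneg:
  fixes p :: "'a \<Rightarrow> real"
  assumes "finite Hops" "\<And>x. x \<in> Hops \<Longrightarrow> 0 < p x" "(\<Sum>x\<in>Hops. p x) = 1"
  shows "0 \<le> entropy_O Hops p"
  unfolding entropy_O_def
proof (rule sum_nonneg)
  fix x assume x: "x \<in> Hops"
  have "p x \<le> (\<Sum>x\<in>Hops. p x)"
    using assms(1,2) x by (intro member_le_sum) (auto intro: less_imp_le)
  then have "0 \<le> log 2 (1 / p x)"
    using assms(2,3) x by simp
  then show "0 \<le> p x * log 2 (1 / p x)"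
    using assms(2)[OF x] by simp
qed

lemma expected_level_nodes_le_entropy:
  fixes p :: "'a \<Rightarrow> real"
  assumes fin: "finite Hops" and pos: "\<And>x. x \<in> Hops \<Longrightarrow> 0 < p x"
    and sum1: "(\<Sum>x\<in>Hops. p x) = 1" and "j < h"
  shows "expected_level_nodes h Hops p j \<le> entropy_O Hops p / real (h - j) * 2^h + 3"
proof -
  define l where "l = h - j"
  let ?W = "words (2^j) Hops" and ?q = "word_prob p"
  have nonneg: "\<And>x. x \<in> Hops \<Longrightarrow> 0 \<le> p x"
    using pos by (simp add: less_imp_le)
  have "level_node_prob h Hops p j w \<le> 2^l * ?q w * log 2 (1 / ?q w) / l + 3 * ?q w"
    if w: "w \<in> ?W" for w
  proof -
    have "0 < ?q w"
      using w pos by (intro word_prob_pos) auto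
    moreover have "?q w \<le> (\<Sum>v\<in>?W. ?q v)"
      using w nonneg finite_lists_length_eq[OF fin] by (intro member_le_sum word_prob_nonneg) auto
    then have "?q w \<le> 1"
      by (simp add: sum_word_prob[OF sum1])
    ultimately have "min 1 (2^l * ?q w) \<le> 2^l * ?q w * log 2 (1 / ?q w) / l + 3 * ?q w"
      using \<open>j < h\<close> by (intro min_1_le_information_bound) (auto simp: l_def)
    moreover have "level_node_prob h Hops p j w \<le> min 1 (2^l * ?q w)"
      using level_node_prob_le_1[OF fin nonneg sum1] level_node_prob_le_word_prob[OF fin nonneg sum1 _ w]
        \<open>j < h\<close> by (simp add: l_def)
    ultimately show ?thesis by linarith
  qed
  then have "expected_level_nodes h Hops p j \<le> (\<Sum>w\<in>?W. 2^l * ?q w * log 2 (1 / ?q w) / l + 3 * ?q w)"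
    unfolding expected_level_nodes_eq_sum_level_node_prob[OF fin less_imp_le[OF \<open>j < h\<close>]]
    by (intro sum_mono) auto
  also have "\<dots> = 2^l / l * (\<Sum>w\<in>?W. ?q w * log 2 (1 / ?q w)) + 3 * (\<Sum>w\<in>?W. ?q w)"
    by (simp add: sum.distrib sum_distrib_left sum_divide_distrib mult.assoc)
  also have "\<dots> = 2^l / l * (2^j * entropy_O Hops p) + 3"
    by (simp add: sum_word_prob_log[OF pos sum1] sum_word_prob[OF sum1])
  also have "2^l / l * (2^j * entropy_O Hops p) = entropy_O Hops p / real (h - j) * 2^h"
    using \<open>j < h\<close> by (simp add: l_def power_add[symmetric])
  finally show ?thesis .
qed

lemma expected_level_nodes_le:
  assumes "finite Hops" "\<And>x. x \<in> Hops \<Longrightarrow> 0 \<le> p x" "(\<Sum>x\<in>Hops. p x) = 1"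
    and "\<And>f. f \<in> labelings h Hops \<Longrightarrow> real (card (dag_level_nodes h f j)) \<le> B"
  shows "expected_level_nodes h Hops p j \<le> B"
proof -
  have "expected_level_nodes h Hops p j \<le> (\<Sum>f\<in>labelings h Hops. lab_prob h p f * B)"
    unfolding expected_level_nodes_def
    using assms(4) lab_prob_nonneg[OF assms(2)] by (intro sum_mono mult_left_mono) auto
  also have "\<dots> = B"
    using sum_lab_prob[OF assms(1,3)] by (simp add: sum_distrib_right[symmetric])
  finally show ?thesis .
qed

lemma expected_level_nodes_le_beta:
  fixes p :: "'a \<Rightarrow> real"
  assumes fin: "finite Hops" and pos: "\<And>x. x \<in> Hops \<Longrightarrow> 0 < p x"
    and sum1: "(\<Sum>x\<in>Hops. p x) = 1" and "j \<le> h"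
  shows "expected_level_nodes h Hops p j \<le> beta h Hops p j"
proof -
  have nonneg: "\<And>x. x \<in> Hops \<Longrightarrow> 0 \<le> p x"
    using pos by (simp add: less_imp_le)
  have "expected_level_nodes h Hops p j \<le> 2^(h-j)"
  proof (rule expected_level_nodes_le[OF fin nonneg sum1])
    fix f
    have "card (dag_level_nodes h f j) \<le> 2^(h-j)"
      unfolding dag_level_nodes_eq using card_image_le[of "{..<(2::nat)^(h-j)}"] by simp
    then show "real (card (dag_level_nodes h f j)) \<le> 2^(h-j)"
      by (simp add: of_nat_le_iff[symmetric])
  qed
  moreover have "expected_level_nodes h Hops p j \<le> real (card Hops) ^ 2^j"
  proof (rule expected_level_nodes_le[OF fin nonneg sum1])
    fix f assume "f \<in> labelings h Hops"
    then have "card (dag_level_nodes h f j) \<le> card (words (2^j) Hops)"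
      using dag_level_nodes_subset_words \<open>j \<le> h\<close> finite_lists_length_eq[OF fin] by (intro card_mono)
    then show "real (card (dag_level_nodes h f j)) \<le> real (card Hops) ^ 2^j"
      by (simp add: card_lists_length_eq[OF fin] of_nat_le_iff[symmetric])
  qed
  moreover have "j < h \<Longrightarrow> expected_level_nodes h Hops p j \<le> entropy_O Hops p / real (h - j) * 2^h + 3"
    by (rule expected_level_nodes_le_entropy[OF fin pos sum1])
  ultimately show ?thesis
    using \<open>j \<le> h\<close> by (auto simp: beta_def)
qed

theorem theorem1:
  fixes h :: nat and Hops :: "'a set" and p :: "'a \<Rightarrow> real" and kstar :: nat
  assumes "h \<ge> 2"
    and "finite Hops"
    and "\<And>x. x \<in> Hops \<Longrightarrow> p x > 0"
    and "(\<Sum>x\<in>Hops. p x) = 1"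
    and "kstar \<in> {1..h}"
    and "\<And>j. j \<in> {1..h} \<Longrightarrow> beta h Hops p j \<le> beta h Hops p kstar"
  shows "2 * real (h - kstar) * (\<Sum>j=1..h. expected_level_nodes h Hops p j)
           \<le> 2 * real h * entropy_O Hops p * 2 ^ h + 6 * real h ^ 2"
proof (cases "kstar = h")
  case True
  then show ?thesis
    using entropy_O_nonneg[OF assms(2-4)] by simp
next
  case False
  let ?H = "entropy_O Hops p" and ?B = "beta h Hops p kstar"
  have "(\<Sum>j=1..h. expected_level_nodes h Hops p j) \<le> (\<Sum>j=1..h. ?B)"
    using expected_level_nodes_le_beta[OF assms(2-4)] assms(6)
    by (intro sum_mono) (meson atLeastAtMost_iff order_trans)
  also have "\<dots> \<le> (\<Sum>j=1..h. ?H / real (h - kstar) * 2^h + 3)"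
    using False by (intro sum_mono) (simp add: beta_def)
  also have "\<dots> = h * (?H / real (h - kstar) * 2^h + 3)"
    by simp
  finally have "2 * real (h - kstar) * (\<Sum>j=1..h. expected_level_nodes h Hops p j)
      \<le> 2 * real (h - kstar) * (h * (?H / real (h - kstar) * 2^h + 3))"
    by (intro mult_left_mono) auto
  also have "\<dots> = 2 * real h * ?H * 2^h + 6 * real h * real (h - kstar)"
    using False assms(5) by (simp add: field_simps)
  also have "\<dots> \<le> 2 * real h * ?H * 2^h + 6 * real h ^ 2"
    by (simp add: power2_eq_square mult_left_mono)
  finally show ?thesis .
qed

end
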